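(* For every integer $d\ge2$, the subgroup $V_{[0,1/d)}$ is not co-amenable in $V_d$, and $T_{[0,1/d)}$ is not co-amenable in $T_d$. In particular the quasi-regular representations $\ell^2(V_d/V_{[0,1/d)})$ of $V_d$ and $\ell^2(T_d/T_{[0,1/d)})$ of $T_d$ are non-amenable.
   Context: $V_d$ is the Higman–Thompson group (piecewise affine bijections of $[0,1)$ with finitely many $d$-adic breakpoints and slopes powers of $d$), $T_d\le V_d$ the subgroup of elements inducing homeomorphisms of the circle $[0,1]/(0\sim1)$. $V_{[0,1/d)}$ (resp. $T_{[0,1/d)}$) denotes the subgroup of elements of $V_d$ (resp. $T_d$) acting as the identity on $[0,1/d)$. A subgroup $H\le G$ is co-amenable if there is a $G$-invariant mean on $\ell^\infty(G/H)$. *)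

theory Defs
  imports "HOL-Analysis.Analysis" "HOL-Algebra.Left_Coset"
begin

definition dadic :: "nat \<Rightarrow> real \<Rightarrow> bool" where
  "dadic d x \<longleftrightarrow> (\<exists>(a::int) (n::nat). x = of_int a / (real d) ^ n)"

text \<open>Higman--Thompson group V_d: piecewise affine (right-continuous pieces) bijections
  of [0,1) with finitely many d-adic breakpoints and slopes integer powers of d.
  Elements are represented as functions on the reals that are the identity outside [0,1),
  so that the group law is function composition.\<close>
definition HT_V :: "nat \<Rightarrow> (real \<Rightarrow> real) set" where
  "HT_V d = {f. bij_betw f {0..<1} {0..<1} \<and> (\<forall>x. x \<notin> {0..<1} \<longrightarrow> f x = x) \<and>
     (\<exists>(n::nat) (p::nat \<Rightarrow> real). p 0 = 0 \<and> p n = 1 \<and>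
        (\<forall>i\<le>n. dadic d (p i)) \<and>
        (\<forall>i<n. p i < p (Suc i) \<and>
           (\<exists>(k::int) (b::real). \<forall>t\<in>{p i..<p (Suc i)}. f t = real d powi k * t + b)))}"

text \<open>T_d: elements of V_d inducing a homeomorphism of the circle [0,1]/(0~1),
  realised as the unit circle in the complex plane via t \<mapsto> cis(2 pi t).\<close>
definition HT_T :: "nat \<Rightarrow> (real \<Rightarrow> real) set" where
  "HT_T d = {f \<in> HT_V d. \<exists>\<phi> \<psi>. homeomorphism (sphere (0::complex) 1) (sphere 0 1) \<phi> \<psi> \<and>
       (\<forall>t\<in>{0..<1}. \<phi> (cis (2 * pi * t)) = cis (2 * pi * f t))}"

definition comp_grp :: "(real \<Rightarrow> real) set \<Rightarrow> (real \<Rightarrow> real) monoid" where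
  "comp_grp S = \<lparr>carrier = S, mult = (\<circ>), one = id\<rparr>"

definition fix_init :: "nat \<Rightarrow> (real \<Rightarrow> real) set \<Rightarrow> (real \<Rightarrow> real) set" where
  "fix_init d S = {f \<in> S. \<forall>x\<in>{0..<1 / real d}. f x = x}"

definition mean_on :: "'b set \<Rightarrow> (('b \<Rightarrow> real) \<Rightarrow> real) \<Rightarrow> bool" where
  "mean_on X m \<longleftrightarrow>
     (\<forall>\<phi> \<psi> a b. bounded (\<phi> ` X) \<and> bounded (\<psi> ` X) \<longrightarrow>
         m (\<lambda>x. a * \<phi> x + b * \<psi> x) = a * m \<phi> + b * m \<psi>) \<and>
     (\<forall>\<phi>. bounded (\<phi> ` X) \<and> (\<forall>x\<in>X. 0 \<le> \<phi> x) \<longrightarrow> 0 \<le> m \<phi>) \<and>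
     m (\<lambda>_. 1) = 1"

definition co_amenable :: "('a, 'c) monoid_scheme \<Rightarrow> 'a set \<Rightarrow> bool" where
  "co_amenable G H \<longleftrightarrow> (\<exists>m. mean_on (lcosets\<^bsub>G\<^esub> H) m \<and>
     (\<forall>g\<in>carrier G. \<forall>\<phi>. bounded (\<phi> ` (lcosets\<^bsub>G\<^esub> H)) \<longrightarrow>
         m (\<lambda>C. \<phi> (g <#\<^bsub>G\<^esub> C)) = m \<phi>))"

end

(*
  Elements of the subgroup H = fix_init d G fix 0, so the left coset aH determines the point a 0,
  and a G-invariant mean on G/H pushes forward along aH \<mapsto> a 0 to a finitely additive
  G-invariant probability \<nu> on [0,1).  The squeeze element maps [0,1/d) onto [0,1/d\<^sup>2), so
  \<nu>[1/d\<^sup>2,1/d) = 0; the rotation by 1/d\<^sup>2 carries each interval [k/d\<^sup>2,(k+1)/d\<^sup>2) to the next, so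
  all d\<^sup>2 of them are null, contradicting \<nu>[0,1) = 1.  Both elements lie in T_d \<subseteq> V_d.
*)
theory Submission
  imports Defs
begin

section \<open>Invariant means and invariant contents\<close>

lemma mean_on_add:
  assumes "mean_on X m" "bounded (\<phi> ` X)" "bounded (\<psi> ` X)"
  shows "m (\<lambda>x. \<phi> x + \<psi> x) = m \<phi> + m \<psi>"
proof -
  have "m (\<lambda>x. 1 * \<phi> x + 1 * \<psi> x) = 1 * m \<phi> + 1 * m \<psi>"
    using assms unfolding mean_on_def by blast
  then show ?thesis by simp
qed

lemma mean_on_diff:
  assumes "mean_on X m" "bounded (\<phi> ` X)" "bounded (\<psi> ` X)"
  shows "m (\<lambda>x. \<phi> x - \<psi> x) = m \<phi> - m \<psi>"
proof -
  have "m (\<lambda>x. 1 * \<phi> x + (-1) * \<psi> x) = 1 * m \<phi> + (-1) * m \<psi>"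
    using assms unfolding mean_on_def by blast
  then show ?thesis by simp
qed

lemma mean_on_mono:
  assumes "mean_on X m" "bounded (\<phi> ` X)" "bounded (\<psi> ` X)" "\<And>x. x \<in> X \<Longrightarrow> \<phi> x \<le> \<psi> x"
  shows "m \<phi> \<le> m \<psi>"
proof -
  have "0 \<le> m (\<lambda>x. \<psi> x - \<phi> x)"
    using assms(1,4) bounded_minus_comp[OF assms(3,2)] unfolding mean_on_def by simp
  then show ?thesis
    using mean_on_diff[OF assms(1,3,2)] by simp
qed

lemma mean_on_cong:
  assumes "mean_on X m" "bounded (\<phi> ` X)" "bounded (\<psi> ` X)" "\<And>x. x \<in> X \<Longrightarrow> \<phi> x = \<psi> x"
  shows "m \<phi> = m \<psi>"
  using mean_on_mono[OF assms(1,2,3)] mean_on_mono[OF assms(1,3,2)] assms(4)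
  by (simp add: order_antisym)

definition invariant_content :: "(real \<Rightarrow> real) set \<Rightarrow> (real set \<Rightarrow> real) \<Rightarrow> bool" where
  "invariant_content S \<nu> \<longleftrightarrow>
     (\<forall>B. 0 \<le> \<nu> B) \<and> (\<forall>A B. A \<inter> B = {} \<longrightarrow> \<nu> (A \<union> B) = \<nu> A + \<nu> B) \<and>
     \<nu> {0..<1} = 1 \<and> (\<forall>f\<in>S. \<forall>B. \<nu> (f -` B) = \<nu> B)"

lemma invariant_content_mono:
  assumes "invariant_content S \<nu>" "A \<subseteq> B"
  shows "\<nu> A \<le> \<nu> B"
proof -
  have "\<nu> (A \<union> (B - A)) = \<nu> A + \<nu> (B - A)" and "0 \<le> \<nu> (B - A)"
    using assms(1) unfolding invariant_content_def by blast+
  moreover have "A \<union> (B - A) = B"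
    using assms(2) by blast
  ultimately show ?thesis by simp
qed

lemma l_coset_comp_grp: "a <#\<^bsub>comp_grp S\<^esub> H = (\<lambda>h. a \<circ> h) ` H"
  unfolding l_coset_def comp_grp_def by auto

lemma lcosets_comp_grp: "lcosets\<^bsub>comp_grp S\<^esub> H = (\<lambda>a. (\<lambda>h. a \<circ> h) ` H) ` S"
  unfolding LCOSETS_def l_coset_comp_grp by (auto simp: comp_grp_def)

definition coset_point :: "(real \<Rightarrow> real) set \<Rightarrow> real" where
  "coset_point C = (SOME f. f \<in> C) 0"

lemma coset_point_l_coset:
  assumes "id \<in> H" "\<forall>h\<in>H. h 0 = 0"
  shows "coset_point ((\<lambda>h. a \<circ> h) ` H) = a 0"
proof -
  have "(SOME f. f \<in> (\<lambda>h. a \<circ> h) ` H) \<in> (\<lambda>h. a \<circ> h) ` H"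
    using assms(1) by (metis imageI someI_ex)
  then obtain h where "h \<in> H" "(SOME f. f \<in> (\<lambda>h. a \<circ> h) ` H) = a \<circ> h"
    by blast
  moreover have "h 0 = 0"
    using assms(2) \<open>h \<in> H\<close> by blast
  ultimately show ?thesis
    unfolding coset_point_def by simp
qed

lemma co_amenable_imp_invariant_content:
  assumes "co_amenable (comp_grp S) H" and idH: "id \<in> H" and fix0: "\<forall>h\<in>H. h 0 = 0"
    and into: "\<And>f x. f \<in> S \<Longrightarrow> x \<in> {0..<1} \<Longrightarrow> f x \<in> {0..<1}"
  shows "\<exists>\<nu>. invariant_content S \<nu>"
proof -
  let ?X = "lcosets\<^bsub>comp_grp S\<^esub> H"
  obtain m where m: "mean_on ?X m" and inv: "\<And>g \<phi>. g \<in> S \<Longrightarrow> bounded (\<phi> ` ?X) \<Longrightarrow>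
      m (\<lambda>C. \<phi> (g <#\<^bsub>comp_grp S\<^esub> C)) = m \<phi>"
    using assms(1) unfolding co_amenable_def comp_grp_def by auto
  have point_in: "coset_point C \<in> {0..<1}" if "C \<in> ?X" for C
    using that into coset_point_l_coset[where H = H, OF idH fix0] unfolding lcosets_comp_grp by auto
  have point_mult: "coset_point (f <#\<^bsub>comp_grp S\<^esub> C) = f (coset_point C)" if C: "C \<in> ?X" for C f
  proof -
    obtain k where C_eq: "C = (\<lambda>h. k \<circ> h) ` H"
      using C unfolding lcosets_comp_grp by blast
    then have "f <#\<^bsub>comp_grp S\<^esub> C = (\<lambda>h. (f \<circ> k) \<circ> h) ` H"
      unfolding l_coset_comp_grp by (auto simp: image_image comp_assoc)
    then show ?thesis
      using coset_point_l_coset[where H = H, OF idH fix0] C_eq by simp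
  qed
  define \<nu> where "\<nu> B = m (\<lambda>C. indicator B (coset_point C))" for B
  have bdd: "bounded ((\<lambda>C. indicator B (p C) :: real) ` ?X)" for B p
    by (rule bounded_subset[of "{0, 1}"]) (auto simp: indicator_def)
  have bdd_one: "bounded ((\<lambda>_. 1 :: real) ` ?X)"
    by (rule bounded_subset[of "{1}"]) auto
  have "0 \<le> \<nu> B" for B
    using m bdd[of B coset_point] unfolding mean_on_def \<nu>_def by simp
  moreover have "\<nu> (A \<union> B) = \<nu> A + \<nu> B" if "A \<inter> B = {}" for A B
  proof -
    have "\<nu> (A \<union> B) = m (\<lambda>C. indicator A (coset_point C) + indicator B (coset_point C))"
      unfolding \<nu>_def using that
      by (intro mean_on_cong[OF m] bdd bounded_plus_comp) (auto simp: indicator_def)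
    then show ?thesis
      unfolding \<nu>_def using mean_on_add[OF m bdd bdd] by simp
  qed
  moreover have "\<nu> {0..<1} = 1"
  proof -
    have "\<nu> {0..<1} = m (\<lambda>_. 1)"
      unfolding \<nu>_def using point_in by (intro mean_on_cong[OF m] bdd bdd_one) auto
    then show ?thesis
      using m unfolding mean_on_def by simp
  qed
  moreover have "\<nu> (f -` B) = \<nu> B" if "f \<in> S" for f B
  proof -
    have "\<nu> (f -` B) = m (\<lambda>C. indicator B (coset_point (f <#\<^bsub>comp_grp S\<^esub> C)))"
      unfolding \<nu>_def by (intro mean_on_cong[OF m] bdd)
        (auto simp: point_mult indicator_def)
    then show ?thesis
      using inv[OF that bdd[of B coset_point]] unfolding \<nu>_def by simp
  qed
  ultimately have "invariant_content S \<nu>"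
    unfolding invariant_content_def by blast
  then show ?thesis by blast
qed

lemma no_invariant_content:
  assumes "invariant_content S \<nu>"
    and g: "g \<in> S" "g -` {0..<b} = {0..<a}" "2 * b \<le> a"
    and r: "r \<in> S" "\<And>s t. 0 \<le> s \<Longrightarrow> t + b \<le> 1 \<Longrightarrow> r -` {s + b..<t + b} = {s..<t}"
    and N: "real N * b = 1" "2 \<le> N"
  shows False
proof -
  have nonneg: "\<And>B. 0 \<le> \<nu> B"
    and add: "\<And>A B. A \<inter> B = {} \<Longrightarrow> \<nu> (A \<union> B) = \<nu> A + \<nu> B"
    and total: "\<nu> {0..<1} = 1"
    and inv: "\<And>f B. f \<in> S \<Longrightarrow> \<nu> (f -` B) = \<nu> B"
    using assms(1) unfolding invariant_content_def by auto
  have "0 < b"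
    using N zero_less_mult_pos[of "real N" b] by simp
  define cell where "cell k = {real k * b..<real (Suc k) * b}" for k
  have "\<nu> {0..<b} + \<nu> {b..<a} = \<nu> {0..<a}"
    using add[of "{0..<b}" "{b..<a}"] \<open>0 < b\<close> g(3) by (simp add: ivl_disj_un_two(3))
  also have "\<dots> = \<nu> {0..<b}"
    using inv[OF g(1), of "{0..<b}"] g(2) by simp
  finally have "\<nu> {b..<a} = 0" by simp
  moreover have "cell 1 \<subseteq> {b..<a}"
    using g(3) unfolding cell_def by auto
  ultimately have cell1: "\<nu> (cell 1) = 0"
    using invariant_content_mono[OF assms(1)] nonneg by (metis order_antisym)
  have shift: "\<nu> (cell (Suc k)) = \<nu> (cell k)" if "Suc k < N" for k
  proof -
    have "real (Suc k) * b + b = real (Suc (Suc k)) * b" by (simp add: algebra_simps)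
    also have "\<dots> \<le> real N * b"
      using that \<open>0 < b\<close> by (intro mult_right_mono) auto
    finally have "r -` cell (Suc k) = cell k"
      using r(2)[of "real k * b" "real (Suc k) * b"] \<open>0 < b\<close> N(1)
      unfolding cell_def by (simp add: algebra_simps)
    then show ?thesis
      using inv[OF r(1), of "cell (Suc k)"] by simp
  qed
  have cell0: "\<nu> (cell k) = 0" if "k < N" for k
    using that
  proof (induction k)
    case 0
    then show ?case using shift[of 0] cell1 N(2) by simp
  next
    case (Suc k)
    then show ?case using shift[of k] by simp
  qed
  have initial: "\<nu> {0..<real k * b} = 0" if "k \<le> N" for k
    using that
  proof (induction k)
    case 0
    then show ?case using add[of "{}" "{}"] by simp
  next
    case (Suc k)
    have "{0..<real (Suc k) * b} = {0..<real k * b} \<union> cell k"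
      using \<open>0 < b\<close> unfolding cell_def by (intro ivl_disj_un_two(3)[symmetric]) auto
    then show ?case
      using Suc add[of "{0..<real k * b}" "cell k"] cell0[of k] unfolding cell_def by auto
  qed
  from initial[of N] show False
    using total N(1) by simp
qed

section \<open>Homeomorphisms of the circle\<close>

lemma bij_betw_cis_sphere: "bij_betw (\<lambda>t. cis (2 * pi * t)) {0..<1} (sphere 0 1)"
proof (rule bij_betw_byWitness[where f' = "\<lambda>z. Arg2pi z / (2 * pi)"])
  show "\<forall>t\<in>{0..<1}. Arg2pi (cis (2 * pi * t)) / (2 * pi) = t"
  proof
    fix t :: real
    assume "t \<in> {0..<1}"
    then have "Arg2pi (cis (2 * pi * t)) = 2 * pi * t"
      by (intro Arg2pi_unique[of 1]) (auto simp: cis_conv_exp)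
    then show "Arg2pi (cis (2 * pi * t)) / (2 * pi) = t"
      by simp
  qed
  show "\<forall>z\<in>sphere 0 1. cis (2 * pi * (Arg2pi z / (2 * pi))) = z"
    using complex_norm_eq_1_exp by (simp add: cis_conv_exp)
  show "(\<lambda>t. cis (2 * pi * t)) ` {0..<1} \<subseteq> sphere 0 1"
    by auto
  show "(\<lambda>z. Arg2pi z / (2 * pi)) ` sphere 0 1 \<subseteq> {0..<1}"
    using Arg2pi_ge_0 Arg2pi_lt_2pi by auto
qed

lemma circle_homeomorphism_of_interval_bij:
  fixes f :: "real \<Rightarrow> real"
  assumes cont: "continuous_on {0..1} f" and "f 0 = 0" "f 1 = 1"
    and bij: "bij_betw f {0..<1} {0..<1}"
  shows "\<exists>\<phi> \<psi>. homeomorphism (sphere (0::complex) 1) (sphere 0 1) \<phi> \<psi> \<and>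
           (\<forall>t\<in>{0..<1}. \<phi> (cis (2 * pi * t)) = cis (2 * pi * f t))"
proof -
  txt \<open>\<open>p\<close> is a quotient map from \<open>[0,1]\<close> onto the circle, through which \<open>\<phi> \<circ> p = p \<circ> f\<close>
    is continuous; a continuous bijection of the compact circle is a homeomorphism.\<close>
  define p :: "real \<Rightarrow> complex" where "p t = cis (2 * pi * t)" for t
  have p_bij: "bij_betw p {0..<1} (sphere 0 1)"
    using bij_betw_cis_sphere unfolding p_def .
  have p_cont: "continuous_on A p" for A
    unfolding p_def by (intro continuous_intros)
  have p_1: "p 1 = p 0"
    by (simp add: p_def)
  define \<phi> where "\<phi> z = p (f (inv_into {0..<1} p z))" for z
  have \<phi>_p: "\<phi> (p t) = p (f t)" if "t \<in> {0..1}" for t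
  proof (cases "t = 1")
    case True
    then show ?thesis
      using p_bij p_1 \<open>f 0 = 0\<close> \<open>f 1 = 1\<close> unfolding \<phi>_def
      by (simp add: bij_betw_def inv_into_f_f)
  next
    case False
    then show ?thesis
      using that p_bij unfolding \<phi>_def by (simp add: bij_betw_def inv_into_f_f)
  qed
  have p_image: "p ` {0..1} = sphere 0 1"
  proof -
    have "{0..1} = insert 1 {0..<1::real}" by auto
    then have "p ` {0..1} = insert (p 0) (p ` {0..<1})"
      using p_1 by simp
    moreover have "p 0 \<in> sphere 0 1"
      by (simp add: p_def)
    ultimately show ?thesis
      using p_bij by (simp add: bij_betw_def insert_absorb)
  qed
  have quotient: "quotient_map (top_of_set {0..1}) (top_of_set (sphere 0 1)) p"
  proof (rule continuous_imp_quotient_map)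
    show "continuous_map (top_of_set {0..1}) (top_of_set (sphere 0 1)) p"
      using p_image p_cont by (auto simp: continuous_map_in_subtopology)
  qed (simp_all add: p_image compact_space_subtopology Hausdorff_space_subtopology)
  have "continuous_on {0..1} (\<phi> \<circ> p)"
  proof -
    have "continuous_on {0..1} (p \<circ> f)"
      using cont p_cont by (rule continuous_on_compose)
    then show ?thesis
      by (rule continuous_on_cong[THEN iffD1, rotated -1]) (auto simp: \<phi>_p)
  qed
  then have "continuous_map (top_of_set {0..1}) euclidean (\<phi> \<circ> p)"
    by simp
  from continuous_compose_quotient_map[OF quotient this]
  have "continuous_on (sphere 0 1) \<phi>"
    by simp
  moreover have "bij_betw \<phi> (sphere 0 1) (sphere 0 1)"
  proof -
    have "bij_betw (p \<circ> f \<circ> inv_into {0..<1} p) (sphere 0 1) (sphere 0 1)"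
      using bij_betw_inv_into[OF p_bij] bij p_bij by (intro bij_betw_trans)
    then show ?thesis
      unfolding \<phi>_def comp_def .
  qed
  ultimately obtain \<psi> where "homeomorphism (sphere (0::complex) 1) (sphere 0 1) \<phi> \<psi>"
    using homeomorphism_compact[OF compact_sphere] by (metis bij_betw_def)
  moreover have "\<forall>t\<in>{0..<1}. \<phi> (cis (2 * pi * t)) = cis (2 * pi * f t)"
    using \<phi>_p unfolding p_def by simp
  ultimately show ?thesis by blast
qed

section \<open>Elements of the Higman--Thompson groups\<close>

lemma dadic_of_int: "dadic d (of_int z)"
  unfolding dadic_def by (rule exI[of _ z], rule exI[of _ 0]) simp

lemma dadic_divide: "dadic d x \<Longrightarrow> dadic d (x / real d)"
  unfolding dadic_def by (metis divide_divide_eq_left power_Suc2)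

lemma dadic_uminus: "dadic d x \<Longrightarrow> dadic d (- x)"
  unfolding dadic_def by (metis minus_divide_left of_int_minus)

lemma dadic_add:
  assumes "0 < d" "dadic d x" "dadic d y"
  shows "dadic d (x + y)"
proof -
  obtain a m b n where x: "x = of_int a / real d ^ m" and y: "y = of_int b / real d ^ n"
    using assms(2,3) unfolding dadic_def by blast
  have "x + y = of_int (a * int d ^ n + b * int d ^ m) / real d ^ (m + n)"
    using assms(1) unfolding x y by (simp add: field_simps power_add)
  then show ?thesis
    unfolding dadic_def by blast
qed

lemma dadic_diff: "0 < d \<Longrightarrow> dadic d x \<Longrightarrow> dadic d y \<Longrightarrow> dadic d (x - y)"
  using dadic_add[of d x "- y"] dadic_uminus by simp

lemma HT_V_memI:
  assumes "bij_betw f {0..<1} {0..<1}" "\<And>x. x \<notin> {0..<1} \<Longrightarrow> f x = x"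
    and "ps \<noteq> []" "hd ps = 0" "last ps = 1" "sorted_wrt (<) ps" "\<forall>x\<in>set ps. dadic d x"
    and affine: "\<And>i. Suc i < length ps \<Longrightarrow>
      \<exists>k c. \<forall>t\<in>{ps ! i..<ps ! Suc i}. f t = real d powi k * t + c"
  shows "f \<in> HT_V d"
  unfolding HT_V_def
proof (intro CollectI conjI exI[of _ "length ps - 1"] exI[of _ "(!) ps"] allI impI)
  show "ps ! 0 = 0" "ps ! (length ps - 1) = 1"
    using assms(3-5) by (simp_all add: hd_conv_nth last_conv_nth)
  show "dadic d (ps ! i)" if "i \<le> length ps - 1" for i
  proof -
    have "i < length ps"
      using assms(3) that by (cases ps) auto
    then show ?thesis
      using assms(7) nth_mem by blast
  qed
  show "ps ! i < ps ! Suc i" if "i < length ps - 1" for i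
    using assms(6) that by (simp add: sorted_wrt_iff_nth_less)
  show "\<exists>k c. \<forall>t\<in>{ps ! i..<ps ! Suc i}. f t = real d powi k * t + c" if "i < length ps - 1" for i
    using affine that by simp
qed (use assms(1,2) in auto)

lemma HT_T_memI:
  assumes "f \<in> HT_V d" "continuous_on {0..1} f" "f 0 = 0"
  shows "f \<in> HT_T d"
proof -
  have "bij_betw f {0..<1} {0..<1}" "f 1 = 1"
    using assms(1) unfolding HT_V_def by auto
  then show ?thesis
    using assms circle_homeomorphism_of_interval_bij unfolding HT_T_def by blast
qed

lemma strict_mono_vimage_atLeastLessThan:
  fixes f :: "'a::linorder \<Rightarrow> 'b::linorder"
  assumes "strict_mono f"
  shows "f -` {f x..<f y} = {x..<y}"
  using assms by (auto simp: strict_mono_less_eq strict_mono_less)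

lemma strict_mono_bij_betw_unit_interval:
  fixes f :: "real \<Rightarrow> real"
  assumes "strict_mono f" "continuous_on {0..1} f" "f 0 = 0" "f 1 = 1"
  shows "bij_betw f {0..<1} {0..<1}"
proof (rule bij_betw_imageI)
  show "inj_on f {0..<1}"
    using assms(1) by (rule strict_mono_imp_inj_on)
  show "f ` {0..<1} = {0..<1}"
  proof
    have "f 0 \<le> f x \<and> f x < f 1" if "x \<in> {0..<1}" for x
      using that strict_mono_less_eq[OF assms(1)] strict_mono_less[OF assms(1)] by simp
    then show "f ` {0..<1} \<subseteq> {0..<1}"
      using assms(3,4) by auto
    show "{0..<1} \<subseteq> f ` {0..<1}"
    proof
      fix y :: real
      assume "y \<in> {0..<1}"
      then obtain x where "0 \<le> x" "x \<le> 1" "f x = y"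
        using IVT'[of f 0 y 1] assms(2-4) by auto
      moreover have "x \<noteq> 1"
        using \<open>f x = y\<close> \<open>y \<in> {0..<1}\<close> assms(4) by auto
      ultimately show "y \<in> f ` {0..<1}"
        by force
    qed
  qed
qed

text \<open>Slope \<open>1/D\<close> on \<open>[0,a]\<close>, slope \<open>D\<close> on \<open>[a, a + a/D]\<close>, the identity elsewhere.\<close>

definition squeeze :: "real \<Rightarrow> real \<Rightarrow> real \<Rightarrow> real" where
  "squeeze D a x = min x (max (x / D) (D * (x - a) + a / D))"

context
  fixes D a :: real
  assumes D: "1 < D" and a: "0 < a"
begin

lemma squeeze_strict_mono: "strict_mono (squeeze D a)"
proof (rule strict_monoI)
  fix x y :: real
  assume "x < y"
  moreover have "x / D < y / D" "D * (x - a) < D * (y - a)"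
    using \<open>x < y\<close> D by (simp_all add: divide_strict_right_mono)
  ultimately show "squeeze D a x < squeeze D a y"
    unfolding squeeze_def by linarith
qed

lemma squeeze_continuous: "continuous_on A (squeeze D a)"
  unfolding squeeze_def using D by (intro continuous_intros) auto

lemma squeeze_eq_contract:
  assumes "0 \<le> x" "x \<le> a"
  shows "squeeze D a x = x / D"
proof -
  have "D * (x - a) + a / D - x / D = (x - a) * (D - 1 / D)"
    using D by (simp add: field_simps)
  moreover have "0 < D - 1 / D"
    using less_1_mult[OF D D] D by (simp add: field_simps)
  moreover have "(x - a) * (D - 1 / D) \<le> 0"
    using assms(2) \<open>0 < D - 1 / D\<close> by (intro mult_nonpos_nonneg) auto
  ultimately have "D * (x - a) + a / D \<le> x / D"
    by linarith
  moreover have "x / D \<le> x"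
    using mult_left_mono[of 1 D x] assms(1) D by (simp add: divide_le_eq)
  ultimately show ?thesis
    unfolding squeeze_def by simp
qed

lemma squeeze_eq_expand:
  assumes "a \<le> x" "x \<le> a + a / D"
  shows "squeeze D a x = D * (x - a) + a / D"
proof -
  have "D * (x - a) + a / D - x / D = (x - a) * (D - 1 / D)"
    using D by (simp add: field_simps)
  moreover have "0 < D - 1 / D"
    using less_1_mult[OF D D] D by (simp add: field_simps)
  moreover have "0 \<le> (x - a) * (D - 1 / D)"
    using assms(1) \<open>0 < D - 1 / D\<close> by simp
  ultimately have "x / D \<le> D * (x - a) + a / D"
    by linarith
  have "D * (x - a) + a / D - x = (D - 1) * (x - (a + a / D))"
    using D by (simp add: field_simps)
  moreover have "(D - 1) * (x - (a + a / D)) \<le> 0"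
    using assms(2) D by (intro mult_nonneg_nonpos) auto
  ultimately have "D * (x - a) + a / D \<le> x"
    by linarith
  with \<open>x / D \<le> D * (x - a) + a / D\<close> show ?thesis
    unfolding squeeze_def by simp
qed

lemma squeeze_eq_self:
  assumes "x \<le> 0 \<or> a + a / D \<le> x"
  shows "squeeze D a x = x"
  using assms
proof
  assume "x \<le> 0"
  then have "x \<le> x / D"
    using mult_left_mono_neg[of 1 D x] D by (simp add: le_divide_eq)
  then show ?thesis
    unfolding squeeze_def by simp
next
  assume "a + a / D \<le> x"
  moreover have "D * (x - a) + a / D - x = (D - 1) * (x - (a + a / D))"
    using D by (simp add: field_simps)
  moreover have "0 \<le> (D - 1) * (x - (a + a / D))"
    using \<open>a + a / D \<le> x\<close> D by simp
  ultimately have "x \<le> D * (x - a) + a / D"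
    by linarith
  then show ?thesis
    unfolding squeeze_def by simp
qed

lemma squeeze_vimage: "squeeze D a -` {0..<a / D} = {0..<a}"
  using strict_mono_vimage_atLeastLessThan[OF squeeze_strict_mono, of 0 a]
    squeeze_eq_self[of 0] squeeze_eq_contract[of a] a by simp

end

lemma squeeze_in_HT_V:
  assumes "2 \<le> d" "dadic d a" "0 < a" "a + a / real d < 1"
  shows "squeeze (real d) a \<in> HT_V d"
proof -
  have D: "1 < real d"
    using assms(1) by simp
  have "squeeze (real d) a x = x" if "x \<notin> {0..<1}" for x
    using that assms(4) by (intro squeeze_eq_self[OF D assms(3)]) auto
  moreover have "bij_betw (squeeze (real d) a) {0..<1} {0..<1}"
  proof (rule strict_mono_bij_betw_unit_interval)
    show "squeeze (real d) a 0 = 0" "squeeze (real d) a 1 = 1"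
      using assms(4) squeeze_eq_self[OF D assms(3)] by auto
  qed (rule squeeze_strict_mono[OF D assms(3)] squeeze_continuous[OF D assms(3)])+
  moreover have "\<forall>x\<in>set [0, a, a + a / real d, 1]. dadic d x"
    using assms(1,2) dadic_of_int[of d 0] dadic_of_int[of d 1]
    by (auto intro!: dadic_add dadic_divide)
  moreover have "\<exists>k c. \<forall>t\<in>{[0, a, a + a / real d, 1] ! i..<[0, a, a + a / real d, 1] ! Suc i}.
      squeeze (real d) a t = real d powi k * t + c" if "i < 3" for i
  proof -
    consider "i = 0" | "i = 1" | "i = 2"
      using \<open>i < 3\<close> by linarith
    then show ?thesis
    proof cases
      case 1
      have "\<forall>t\<in>{0..<a}. squeeze (real d) a t = real d powi (-1) * t + 0"
        using squeeze_eq_contract[OF D assms(3)] by (auto simp: power_int_minus divide_inverse mult.commute)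
      then show ?thesis
        unfolding 1 by (simp only: nth_Cons_0 nth_Cons_Suc numeral_nat) blast
    next
      case 2
      have "\<forall>t\<in>{a..<a + a / real d}. squeeze (real d) a t = real d powi 1 * t + (a / real d - real d * a)"
        using squeeze_eq_expand[OF D assms(3)] by (auto simp: algebra_simps)
      then show ?thesis
        unfolding 2 by (simp only: nth_Cons_0 nth_Cons_Suc numeral_nat) blast
    next
      case 3
      have "\<forall>t\<in>{a + a / real d..<1}. squeeze (real d) a t = real d powi 0 * t + 0"
        using squeeze_eq_self[OF D assms(3)] by auto
      then show ?thesis
        unfolding 3 by (simp only: nth_Cons_0 nth_Cons_Suc numeral_nat) blast
    qed
  qed
  moreover have "0 < a / real d"
    using assms(1,3) by simp
  ultimately show ?thesis
    using assms(3,4) by (intro HT_V_memI[where ps = "[0, a, a + a / real d, 1]"]) auto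
qed

lemma squeeze_in_HT_T:
  assumes "2 \<le> d" "dadic d a" "0 < a" "a + a / real d < 1"
  shows "squeeze (real d) a \<in> HT_T d"
proof (rule HT_T_memI)
  show "squeeze (real d) a \<in> HT_V d"
    using assms by (rule squeeze_in_HT_V)
  show "continuous_on {0..1} (squeeze (real d) a)" "squeeze (real d) a 0 = 0"
    using assms(1,3) by (simp_all add: squeeze_continuous squeeze_eq_self)
qed

definition rotation :: "real \<Rightarrow> real \<Rightarrow> real" where
  "rotation c x = (if x \<in> {0..<1} then frac (x + c) else x)"

lemma rotation_eq:
  assumes "x \<in> {0..<1}" "0 \<le> c" "c < 1"
  shows "rotation c x = (if x + c < 1 then x + c else x + c - 1)"
  using assms by (auto simp: rotation_def frac_unique_iff)

lemma rotation_bij: "bij_betw (rotation c) {0..<1} {0..<1}"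
proof (rule bij_betw_byWitness[where f' = "rotation (- c)"])
  have inverse: "rotation (- c') (rotation c' x) = x" if "x \<in> {0..<1}" for c' x
  proof -
    have "rotation c' x = frac (x + c')" "frac (x + c') \<in> {0..<1}"
      using that by (simp_all add: rotation_def frac_lt_1)
    then have "rotation (- c') (rotation c' x) = frac (frac (x + c') - c')"
      by (simp add: rotation_def)
    also have "frac (x + c') - c' = x + of_int (- \<lfloor>x + c'\<rfloor>)"
      by (simp add: frac_def)
    also have "frac \<dots> = x"
      using that by (simp only: frac_add_of_int_right frac_eq_id)
    finally show ?thesis .
  qed
  show "\<forall>x\<in>{0..<1}. rotation (- c) (rotation c x) = x"
    and "\<forall>x\<in>{0..<1}. rotation c (rotation (- c) x) = x"
    using inverse inverse[of _ "- c"] by auto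
  show "rotation c ` {0..<1} \<subseteq> {0..<1}" "rotation (- c) ` {0..<1} \<subseteq> {0..<1}"
    by (auto simp: rotation_def frac_lt_1)
qed

lemma rotation_vimage:
  assumes "0 \<le> c" "c < 1" "0 \<le> s" "t + c \<le> 1"
  shows "rotation c -` {s + c..<t + c} = {s..<t}"
proof -
  have "rotation c x \<in> {s + c..<t + c} \<longleftrightarrow> x \<in> {s..<t}" for x
  proof (cases "x \<in> {0..<1}")
    case x: True
    show ?thesis
    proof (cases "x + c < 1")
      case True
      then show ?thesis
        using rotation_eq[OF x assms(1,2)] by simp
    next
      case False
      then have "rotation c x < s + c" "t \<le> x"
        using rotation_eq[OF x assms(1,2)] x assms(3,4) by simp_all
      then show ?thesis
        by simp
    qed
  next
    case False
    then have "rotation c x = x"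
      unfolding rotation_def by (rule if_not_P)
    moreover have "x < 0 \<or> 1 \<le> x"
      using False by auto
    ultimately show ?thesis
      using assms by auto
  qed
  then show ?thesis by blast
qed

lemma cis_rotation:
  assumes "t \<in> {0..<1}"
  shows "cis (2 * pi * rotation c t) = cis (2 * pi * c) * cis (2 * pi * t)"
proof -
  have "2 * pi * rotation c t = 2 * pi * (t + c) - 2 * pi * of_int \<lfloor>t + c\<rfloor>"
    using assms by (simp add: rotation_def frac_def algebra_simps)
  then have "cis (2 * pi * rotation c t) = cis (2 * pi * (t + c)) / cis (2 * pi * of_int \<lfloor>t + c\<rfloor>)"
    by (simp only: cis_divide)
  also have "cis (2 * pi * of_int \<lfloor>t + c\<rfloor>) = 1"
    by simp
  finally show ?thesis
    by (simp add: cis_mult distrib_left add.commute)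
qed

lemma rotation_in_HT_V:
  assumes "0 < d" "dadic d c" "0 < c" "c < 1"
  shows "rotation c \<in> HT_V d"
proof (rule HT_V_memI[where ps = "[0, 1 - c, 1]"])
  show "\<forall>x\<in>set [0, 1 - c, 1]. dadic d x"
    using assms(1,2) dadic_of_int[of d 0] dadic_of_int[of d 1] by (auto intro: dadic_diff)
  show "\<exists>k b. \<forall>t\<in>{[0, 1 - c, 1] ! i..<[0, 1 - c, 1] ! Suc i}. rotation c t = real d powi k * t + b"
    if "Suc i < length [0, 1 - c, 1]" for i
  proof -
    have "i = 0 \<or> i = 1"
      using that by auto
    then show ?thesis
    proof
      assume "i = 0"
      have "\<forall>t\<in>{0..<1 - c}. rotation c t = real d powi 0 * t + c"
        using assms(3,4) rotation_eq[of _ c] by auto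
      then show ?thesis
        unfolding \<open>i = 0\<close> by (simp only: nth_Cons_0 nth_Cons_Suc) blast
    next
      assume "i = 1"
      have "\<forall>t\<in>{1 - c..<1}. rotation c t = real d powi 0 * t + (c - 1)"
        using assms(3,4) rotation_eq[of _ c] by auto
      then show ?thesis
        unfolding \<open>i = 1\<close> by (simp only: nth_Cons_0 nth_Cons_Suc One_nat_def) blast
    qed
  qed
qed (use assms(3,4) in \<open>auto simp: rotation_bij rotation_def\<close>)

lemma rotation_in_HT_T:
  assumes "0 < d" "dadic d c" "0 < c" "c < 1"
  shows "rotation c \<in> HT_T d"
proof -
  let ?\<phi> = "\<lambda>z. cis (2 * pi * c) * z" and ?\<psi> = "\<lambda>z. cis (- (2 * pi * c)) * z"
  have "homeomorphism (sphere (0::complex) 1) (sphere 0 1) ?\<phi> ?\<psi>"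
    by (rule homeomorphismI) (auto intro!: continuous_intros simp: norm_mult cis_mult)
  moreover have "\<forall>t\<in>{0..<1}. ?\<phi> (cis (2 * pi * t)) = cis (2 * pi * rotation c t)"
    by (simp add: cis_rotation)
  ultimately show ?thesis
    using rotation_in_HT_V[OF assms] unfolding HT_T_def by blast
qed

lemma id_in_HT_T: "id \<in> HT_T d"
proof (rule HT_T_memI)
  show "id \<in> HT_V d"
  proof (rule HT_V_memI[where ps = "[0, 1]"])
    show "\<forall>x\<in>set [0, 1]. dadic d x"
      using dadic_of_int[of d 0] dadic_of_int[of d 1] by simp
    show "\<exists>k c. \<forall>t\<in>{[0, 1] ! i..<[0, 1] ! Suc i}. id t = real d powi k * t + c" for i
      by (rule exI[of _ 0], rule exI[of _ 0]) simp
  qed auto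
qed auto

lemma not_co_amenable_fix_init:
  assumes "2 \<le> d" "S \<subseteq> HT_V d" "id \<in> S"
    and squeeze: "squeeze (real d) (1 / real d) \<in> S"
    and rotation: "rotation (1 / real d / real d) \<in> S"
  shows "\<not> co_amenable (comp_grp S) (fix_init d S)"
proof
  assume "co_amenable (comp_grp S) (fix_init d S)"
  moreover have "id \<in> fix_init d S" "\<forall>h\<in>fix_init d S. h 0 = 0"
    using assms(1,3) by (auto simp: fix_init_def)
  moreover have "f x \<in> {0..<1}" if "f \<in> S" "x \<in> {0..<1}" for f x
  proof -
    have "bij_betw f {0..<1} {0..<1}"
      using that(1) assms(2) unfolding HT_V_def by blast
    then show ?thesis
      using that(2) by (rule bij_betw_apply)
  qed
  ultimately obtain \<nu> where \<nu>: "invariant_content S \<nu>"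
    using co_amenable_imp_invariant_content by metis
  have D: "1 < real d"
    using assms(1) by simp
  show False
  proof (rule no_invariant_content[OF \<nu> squeeze _ _ rotation])
    show "squeeze (real d) (1 / real d) -` {0..<1 / real d / real d} = {0..<1 / real d}"
      using D by (intro squeeze_vimage) auto
    show "2 * (1 / real d / real d) \<le> 1 / real d"
      using assms(1) by (simp add: field_simps)
    show "rotation (1 / real d / real d) -` {s + 1 / real d / real d..<t + 1 / real d / real d} = {s..<t}"
      if "0 \<le> s" "t + 1 / real d / real d \<le> 1" for s t
      using that less_1_mult[OF D D] by (intro rotation_vimage) auto
    show "real (d ^ 2) * (1 / real d / real d) = 1" "2 \<le> d ^ 2"
      using assms(1) by (simp_all add: power2_eq_square) (metis le_square order_trans)
  qed
qed

theorem lemma5p6: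
  fixes d :: nat
  assumes "d \<ge> 2"
  shows "\<not> co_amenable (comp_grp (HT_V d)) (fix_init d (HT_V d)) \<and>
         \<not> co_amenable (comp_grp (HT_T d)) (fix_init d (HT_T d))"
proof -
  have dadic_a: "dadic d (1 / real d)"
    using dadic_divide[OF dadic_of_int[of d 1]] by simp
  have "real d * 2 \<le> real d * real d"
    using assms by (intro mult_left_mono) auto
  then have d_square: "1 + real d < real d * real d"
    using assms by linarith
  then have small: "1 / real d + 1 / real d / real d < 1"
    using assms by (simp add: field_simps)
  have squeeze: "squeeze (real d) (1 / real d) \<in> HT_T d"
    using assms dadic_a small by (intro squeeze_in_HT_T) auto
  have rotation: "rotation (1 / real d / real d) \<in> HT_T d"
  proof (rule rotation_in_HT_T)
    show "0 < d" "0 < 1 / real d / real d"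
      using assms by simp_all
    show "1 / real d / real d < 1"
      using d_square by (simp add: field_simps)
  qed (rule dadic_divide[OF dadic_a])
  have "HT_T d \<subseteq> HT_V d"
    by (auto simp: HT_T_def)
  then show ?thesis
    using not_co_amenable_fix_init[OF assms, of "HT_V d"] not_co_amenable_fix_init[OF assms, of "HT_T d"]
      squeeze rotation id_in_HT_T by blast
qed

end
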